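(* Let $J\subseteq\mathbb{M}_2$ be a bigraded ideal and $f,g:\Sigma^{p,q}J\to\mathbb{M}_2$ two bigraded $\mathbb{M}_2$-module homomorphisms. If there is a nonzero homogeneous element $x\in J$ with $f(x)\neq0$ and $f(x)=g(x)$, then $f=g$.
   Context: $\mathbb{M}_2$ is the bigraded commutative $\mathbb{F}_2$-algebra with $\mathbb{F}_2$-basis the elements $\rho^m\tau^n$ ($m,n\ge0$) in bidegree $(m,m+n)$ and $\frac{\theta}{\rho^m\tau^n}$ ($m,n\ge 0$) in bidegree $(-m,-2-m-n)$; multiplication: $\rho^a\tau^b\cdot\rho^c\tau^d=\rho^{a+c}\tau^{b+d}$, $\rho^a\tau^b\cdot\frac{\theta}{\rho^c\tau^d}=\frac{\theta}{\rho^{c-a}\tau^{d-b}}$ if $a\le c,b\le d$ and $0$ otherwise, and the product of two elements of the form $\frac{\theta}{\rho^c\tau^d}$ is $0$. $\Sigma^{p,q}J$ is the shift with $(\Sigma^{p,q}J)^{a,b}=J^{a-p,b-q}$; module homomorphisms preserve bidegree. *)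

theory Defs
  imports Main
begin

text \<open>F2-basis of M2: Pos m n is rho^m tau^n, Neg m n is theta/(rho^m tau^n).
  An element of M2 is a finite F2-linear combination of basis elements,
  represented by the finite set of basis elements occurring with coefficient 1.\<close>

datatype m2basis = Pos nat nat | Neg nat nat

fun m2deg :: "m2basis \<Rightarrow> int \<times> int" where
  "m2deg (Pos m n) = (int m, int m + int n)"
| "m2deg (Neg m n) = (- int m, -2 - int m - int n)"

fun m2bmul :: "m2basis \<Rightarrow> m2basis \<Rightarrow> m2basis option" where
  "m2bmul (Pos a b) (Pos c d) = Some (Pos (a + c) (b + d))"
| "m2bmul (Pos a b) (Neg c d) = (if a \<le> c \<and> b \<le> d then Some (Neg (c - a) (d - b)) else None)"
| "m2bmul (Neg c d) (Pos a b) = (if a \<le> c \<and> b \<le> d then Some (Neg (c - a) (d - b)) else None)"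
| "m2bmul (Neg a b) (Neg c d) = None"

type_synonym m2 = "m2basis set"

definition m2_elem :: "m2 \<Rightarrow> bool" where
  "m2_elem x \<longleftrightarrow> finite x"

definition m2_add :: "m2 \<Rightarrow> m2 \<Rightarrow> m2" where
  "m2_add x y = (x - y) \<union> (y - x)"

text \<open>Bilinear extension of the basis multiplication, coefficients mod 2.\<close>
definition m2_mult :: "m2 \<Rightarrow> m2 \<Rightarrow> m2" where
  "m2_mult x y = {c. odd (card {(a, b). a \<in> x \<and> b \<in> y \<and> m2bmul a b = Some c})}"

text \<open>x is homogeneous of bidegree d (the zero element is homogeneous of every degree).\<close>
definition m2_homog :: "int \<times> int \<Rightarrow> m2 \<Rightarrow> bool" where
  "m2_homog d x \<longleftrightarrow> finite x \<and> (\<forall>b\<in>x. m2deg b = d)"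

definition bigraded_ideal :: "m2 set \<Rightarrow> bool" where
  "bigraded_ideal J \<longleftrightarrow>
     (\<forall>x\<in>J. m2_elem x) \<and> {} \<in> J \<and>
     (\<forall>x\<in>J. \<forall>y\<in>J. m2_add x y \<in> J) \<and>
     (\<forall>r x. m2_elem r \<longrightarrow> x \<in> J \<longrightarrow> m2_mult r x \<in> J) \<and>
     (\<forall>x\<in>J. \<forall>d. {b\<in>x. m2deg b = d} \<in> J)"

text \<open>Bigraded M2-module homomorphism Sigma^{p,q} J \<rightarrow> M2: additive, M2-linear,
  and sending (Sigma^{p,q}J)^{a,b} = J^{a-p,b-q} into M2^{a,b}.\<close>
definition shifted_ideal_hom :: "m2 set \<Rightarrow> int \<Rightarrow> int \<Rightarrow> (m2 \<Rightarrow> m2) \<Rightarrow> bool" where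
  "shifted_ideal_hom J p q f \<longleftrightarrow>
     (\<forall>x\<in>J. m2_elem (f x)) \<and>
     (\<forall>x\<in>J. \<forall>y\<in>J. f (m2_add x y) = m2_add (f x) (f y)) \<and>
     (\<forall>r x. m2_elem r \<longrightarrow> x \<in> J \<longrightarrow> f (m2_mult r x) = m2_mult r (f x)) \<and>
     (\<forall>x\<in>J. \<forall>a b. m2_homog (a - p, b - q) x \<longrightarrow> m2_homog (a, b) (f x))"

end

theory Submission
  imports Defs
begin

text \<open>Every bidegree of \<open>\<M>\<^sub>2\<close> is spanned by at most one basis element, so homogeneous
  elements are \<open>0\<close> or basis elements and a homomorphism is determined on each homogeneous
  basis element \<open>b \<in> J\<close> by whether \<open>f b\<close> vanishes. If \<open>f b \<noteq> 0 = g b\<close>, choose cofactors with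
  \<open>r x = r' b \<noteq> 0\<close> (a least common multiple); then \<open>r f(x) = r' f(b)\<close>, which a degree
  computation shows to be nonzero, while \<open>r g(x) = r' g(b) = 0\<close>, contradicting \<open>f x = g x\<close>.\<close>

lemma m2deg_inj: "m2deg a = m2deg b \<Longrightarrow> a = b"
  by (cases a; cases b; auto)

lemma m2bmul_commute: "m2bmul a b = m2bmul b a"
  by (cases a; cases b; auto)

lemma m2_mult_singletons:
  "m2_mult {a} {b} = (case m2bmul a b of None \<Rightarrow> {} | Some c \<Rightarrow> {c})"
proof -
  have "{(a', b'). a' \<in> {a} \<and> b' \<in> {b} \<and> m2bmul a' b' = Some c} =
        (if m2bmul a b = Some c then {(a, b)} else {})" for c
    by auto
  then show ?thesis
    unfolding m2_mult_def by (auto split: option.splits)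
qed

lemma m2_mult_empty_right: "m2_mult r {} = {}"
  unfolding m2_mult_def by auto

lemma m2_add_self: "m2_add s s = {}"
  unfolding m2_add_def by auto

lemma m2_add_singleton: "c \<notin> F \<Longrightarrow> m2_add {c} F = insert c F"
  unfolding m2_add_def by auto

lemma subsingleton_if_same_deg:
  assumes "\<forall>c\<in>S. m2deg c = d"
  shows "S = {} \<or> (\<exists>c. S = {c} \<and> m2deg c = d)"
proof (cases "S = {}")
  case False
  then obtain c where "c \<in> S" by blast
  with assms m2deg_inj have "\<forall>c'\<in>S. c' = c" by metis
  with \<open>c \<in> S\<close> have "S = {c}" by blast
  with assms show ?thesis by blast
qed simp

lemma m2_homog_subsingleton:
  "m2_homog d x \<Longrightarrow> x = {} \<or> (\<exists>c. x = {c} \<and> m2deg c = d)"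
  unfolding m2_homog_def using subsingleton_if_same_deg by blast

text \<open>\<open>m2_cofactors x y = (r, r')\<close> gives a least common multiple \<open>r x = r' y\<close> of two basis
  elements; for two \<open>\<theta>\<close>-classes it is the one with the smaller denominator.\<close>

fun m2_cofactors :: "m2basis \<Rightarrow> m2basis \<Rightarrow> m2basis \<times> m2basis" where
  "m2_cofactors (Pos m n) (Pos k l) =
     (Pos (max m k - m) (max n l - n), Pos (max m k - k) (max n l - l))"
| "m2_cofactors (Pos m n) (Neg k l) = (Neg (m + k) (n + l), Pos 0 0)"
| "m2_cofactors (Neg m n) (Pos k l) = (Pos 0 0, Neg (m + k) (n + l))"
| "m2_cofactors (Neg m n) (Neg k l) =
     (Pos (m - min m k) (n - min n l), Pos (k - min m k) (l - min n l))"

lemma m2_cofactors_common_multiple: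
  "\<exists>w. m2bmul (fst (m2_cofactors x y)) x = Some w \<and> m2bmul (snd (m2_cofactors x y)) y = Some w"
  by (cases x; cases y; auto simp: max_def min_def)

lemma m2_cofactor_mult_nonzero:
  assumes "m2deg e = (fst (m2deg x) + p, snd (m2deg x) + q)"
    and "m2deg z = (fst (m2deg y) + p, snd (m2deg y) + q)"
    and "m2bmul y e = m2bmul x z"
  shows "m2bmul (snd (m2_cofactors x y)) z \<noteq> None"
  using assms
  by (cases x; cases y; cases e; cases z; auto simp: max_def min_def split: if_splits)

lemma bigraded_ideal_singleton:
  assumes "bigraded_ideal J" "y \<in> J" "c \<in> y"
  shows "{c} \<in> J"
proof -
  have "{b \<in> y. m2deg b = m2deg c} \<in> J"
    using assms(1,2) unfolding bigraded_ideal_def by blast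
  moreover have "{b \<in> y. m2deg b = m2deg c} = {c}"
    using assms(3) m2deg_inj by blast
  ultimately show ?thesis by simp
qed

lemma shifted_ideal_hom_empty:
  assumes "bigraded_ideal J" "shifted_ideal_hom J p q f"
  shows "f {} = {}"
proof -
  have "{} \<in> J" using assms(1) unfolding bigraded_ideal_def by blast
  then have "f (m2_add {} {}) = m2_add (f {}) (f {})"
    using assms(2) unfolding shifted_ideal_hom_def by blast
  then show ?thesis by (simp add: m2_add_self m2_add_def)
qed

lemma shifted_ideal_hom_singleton_deg:
  assumes "shifted_ideal_hom J p q f" "{b} \<in> J" "c \<in> f {b}"
  shows "m2deg c = (fst (m2deg b) + p, snd (m2deg b) + q)"
proof -
  have "m2_homog (fst (m2deg b) + p - p, snd (m2deg b) + q - q) {b}"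
    unfolding m2_homog_def by simp
  then have "m2_homog (fst (m2deg b) + p, snd (m2deg b) + q) (f {b})"
    using assms(1,2) unfolding shifted_ideal_hom_def by blast
  then show ?thesis using assms(3) unfolding m2_homog_def by blast
qed

lemma shifted_ideal_hom_singleton_cases:
  assumes "shifted_ideal_hom J p q f" "{b} \<in> J"
  shows "f {b} = {} \<or> (\<exists>c. f {b} = {c} \<and> m2deg c = (fst (m2deg b) + p, snd (m2deg b) + q))"
  using subsingleton_if_same_deg shifted_ideal_hom_singleton_deg[OF assms] by blast

lemma shifted_ideal_hom_mult_singleton:
  assumes "shifted_ideal_hom J p q f" "{b} \<in> J"
  shows "f (m2_mult {r} {b}) = m2_mult {r} (f {b})"
  using assms unfolding shifted_ideal_hom_def m2_elem_def by blast

lemma shifted_ideal_hom_singleton_nonzero_transfer: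
  assumes f: "shifted_ideal_hom J p q f" and g: "shifted_ideal_hom J p q g"
    and x: "{x} \<in> J" and fx: "f {x} = {e}" and gx: "g {x} = {e}"
    and b: "{b} \<in> J" and fb: "f {b} = {z}"
  shows "g {b} \<noteq> {}"
proof
  assume gb: "g {b} = {}"
  define r where "r = fst (m2_cofactors x b)"
  define r' where "r' = snd (m2_cofactors x b)"
  obtain w where w: "m2bmul r x = Some w" "m2bmul r' b = Some w"
    using m2_cofactors_common_multiple[of x b] unfolding r_def r'_def by blast
  then have rx: "m2_mult {r} {x} = m2_mult {r'} {b}"
    by (simp add: m2_mult_singletons)
  have "m2_mult {b} {e} = m2_mult {x} {z}"
    using shifted_ideal_hom_mult_singleton[OF f x, of b]
      shifted_ideal_hom_mult_singleton[OF f b, of x] fx fb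
    by (simp add: m2_mult_singletons m2bmul_commute)
  then have "m2bmul b e = m2bmul x z"
    by (simp add: m2_mult_singletons split: option.splits)
  then obtain u where u: "m2bmul r' z = Some u"
    using m2_cofactor_mult_nonzero[of e x p q z b]
      shifted_ideal_hom_singleton_deg[OF f x] shifted_ideal_hom_singleton_deg[OF f b] fx fb
    unfolding r'_def by fastforce
  have "f (m2_mult {r} {x}) = {u}"
    using rx shifted_ideal_hom_mult_singleton[OF f b, of r'] fb u by (simp add: m2_mult_singletons)
  moreover have "f (m2_mult {r} {x}) = g (m2_mult {r} {x})"
    using shifted_ideal_hom_mult_singleton[OF f x, of r]
      shifted_ideal_hom_mult_singleton[OF g x, of r] fx gx by simp
  moreover have "g (m2_mult {r} {x}) = {}"
    using rx shifted_ideal_hom_mult_singleton[OF g b, of r'] gb by (simp add: m2_mult_empty_right)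
  ultimately show False by simp
qed

lemma shifted_ideal_hom_singleton_eq:
  assumes f: "shifted_ideal_hom J p q f" and g: "shifted_ideal_hom J p q g"
    and x: "{x} \<in> J" and fx: "f {x} = {e}" and gx: "g {x} = {e}"
    and b: "{b} \<in> J"
  shows "f {b} = g {b}"
  using shifted_ideal_hom_singleton_cases[OF f b] shifted_ideal_hom_singleton_cases[OF g b]
    shifted_ideal_hom_singleton_nonzero_transfer[OF f g x fx gx b]
    shifted_ideal_hom_singleton_nonzero_transfer[OF g f x gx fx b]
    m2deg_inj
  by metis

lemma shifted_ideal_hom_eqI_singletons:
  assumes J: "bigraded_ideal J"
    and f: "shifted_ideal_hom J p q f" and g: "shifted_ideal_hom J p q g"
    and singletons: "\<And>c. {c} \<in> J \<Longrightarrow> f {c} = g {c}"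
    and y: "y \<in> J"
  shows "f y = g y"
proof -
  have "finite y" using J y unfolding bigraded_ideal_def m2_elem_def by blast
  moreover have "Y \<subseteq> y \<Longrightarrow> Y \<in> J \<and> f Y = g Y" if "finite Y" for Y
    using that
  proof (induction Y rule: finite_induct)
    case empty
    then show ?case
      using J shifted_ideal_hom_empty[OF J f] shifted_ideal_hom_empty[OF J g]
      unfolding bigraded_ideal_def by simp
  next
    case (insert c F)
    have c: "{c} \<in> J" using bigraded_ideal_singleton[OF J y] insert.prems by blast
    have F: "F \<in> J" "f F = g F" using insert by auto
    have "m2_add {c} F \<in> J" using J c F(1) unfolding bigraded_ideal_def by blast
    moreover have "f (m2_add {c} F) = g (m2_add {c} F)"
      using f g c F singletons[OF c] unfolding shifted_ideal_hom_def by simp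
    ultimately show ?case using m2_add_singleton[OF insert.hyps(2)] by simp
  qed
  ultimately show ?thesis by blast
qed

theorem lemmaA3:
  fixes J :: "m2 set" and p q :: int and f g :: "m2 \<Rightarrow> m2" and x :: m2
  assumes "bigraded_ideal J"
    and "shifted_ideal_hom J p q f"
    and "shifted_ideal_hom J p q g"
    and "x \<in> J" and "x \<noteq> {}" and "\<exists>d. m2_homog d x"
    and "f x \<noteq> {}" and "f x = g x"
  shows "\<forall>y\<in>J. f y = g y"
proof
  fix y assume "y \<in> J"
  obtain b where b: "x = {b}"
    using assms(5,6) m2_homog_subsingleton by blast
  obtain e where fb: "f {b} = {e}"
    using shifted_ideal_hom_singleton_cases[OF assms(2)] assms(4,7) b by blast
  moreover have "g {b} = {e}" using fb assms(8) b by simp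
  ultimately show "f y = g y"
    using shifted_ideal_hom_eqI_singletons[OF assms(1-3) _ \<open>y \<in> J\<close>]
      shifted_ideal_hom_singleton_eq[OF assms(2,3)] assms(4) b
    by blast
qed

end
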